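(* Let $n_*>2$ be an integer, $\phi:(n_*,+\infty)\to(0,+\infty)$ strictly increasing with $\phi(n_*+1)>1$, and $\mathsf{G}\in\mathbb{G}(n_*,\phi)$. Then for all $\theta,\alpha>0$, $$\mathit{\Theta}(\alpha,\theta)\le n_*^\theta(e^\alpha+1)T_o(\alpha,\theta),$$ where $T_x(\alpha,\theta)=\sum_{y\in\mathsf{V}}[n(y)]^{1+\theta}\exp[-\alpha\rho(x,y)]$.
   Context: $\mathsf{G}=(\mathsf{V},\mathsf{E})$ is a countable, connected, locally finite undirected graph; $n(x)$ is the degree, $\rho$ the path distance, $o\in\mathsf{V}$ a fixed root. $\mathit{\Theta}(\alpha,\theta)=\sum_{x}\sum_{y\sim x}[n(x)n(y)]^\theta\exp[-\alpha\rho(o,x)]$ (values in $[0,\infty]$). For integer $n_*>2$, $\mathsf{V}_*=\{x:n(x)\le n_*\}$, $\mathsf{V}_*^c=\mathsf{V}\setminus\mathsf{V}_*$. For strictly increasing $\phi:(n_*,+\infty)\to(0,+\infty)$, $\mathbb{G}(n_*,\phi)$ is the family of graphs with $\rho(x,y)\ge\phi[\max\{n(x),n(y)\}]$ for all $x,y\in\mathsf{V}_*^c$. *)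

theory Defs
  imports "HOL-Analysis.Analysis"
begin

definition is_walk :: "('a \<Rightarrow> 'a \<Rightarrow> bool) \<Rightarrow> 'a \<Rightarrow> 'a \<Rightarrow> nat \<Rightarrow> bool" where
  "is_walk E x y k \<longleftrightarrow> (\<exists>p::nat \<Rightarrow> 'a. p 0 = x \<and> p k = y \<and> (\<forall>i<k. E (p i) (p (Suc i))))"

definition gdist :: "('a \<Rightarrow> 'a \<Rightarrow> bool) \<Rightarrow> 'a \<Rightarrow> 'a \<Rightarrow> nat" where
  "gdist E x y = (LEAST k. is_walk E x y k)"

definition deg :: "('a \<Rightarrow> 'a \<Rightarrow> bool) \<Rightarrow> 'a \<Rightarrow> nat" where
  "deg E x = card {y. E x y}"

definition cclf_graph :: "'a set \<Rightarrow> ('a \<Rightarrow> 'a \<Rightarrow> bool) \<Rightarrow> bool" where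
  "cclf_graph V E \<longleftrightarrow>
     V \<noteq> {} \<and> countable V \<and>
     (\<forall>x y. E x y \<longrightarrow> x \<in> V \<and> y \<in> V) \<and>
     (\<forall>x y. E x y \<longrightarrow> E y x) \<and>
     (\<forall>x. \<not> E x x) \<and>
     (\<forall>x\<in>V. finite {y. E x y}) \<and>
     (\<forall>x\<in>V. \<forall>y\<in>V. \<exists>k. is_walk E x y k)"

definition Theta :: "'a set \<Rightarrow> ('a \<Rightarrow> 'a \<Rightarrow> bool) \<Rightarrow> 'a \<Rightarrow> real \<Rightarrow> real \<Rightarrow> ennreal" where
  "Theta V E r \<alpha> \<theta> =
     (\<Sum>\<^sub>\<infinity>x\<in>V. \<Sum>\<^sub>\<infinity>y\<in>{y. E x y}.
        ennreal ((real (deg E x * deg E y)) powr \<theta> * exp (- \<alpha> * real (gdist E r x))))"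

definition Tsum :: "'a set \<Rightarrow> ('a \<Rightarrow> 'a \<Rightarrow> bool) \<Rightarrow> 'a \<Rightarrow> real \<Rightarrow> real \<Rightarrow> ennreal" where
  "Tsum V E x \<alpha> \<theta> =
     (\<Sum>\<^sub>\<infinity>y\<in>V. ennreal ((real (deg E y)) powr (1 + \<theta>) * exp (- \<alpha> * real (gdist E x y))))"

definition in_GG :: "'a set \<Rightarrow> ('a \<Rightarrow> 'a \<Rightarrow> bool) \<Rightarrow> nat \<Rightarrow> (real \<Rightarrow> real) \<Rightarrow> bool" where
  "in_GG V E nstar \<phi> \<longleftrightarrow>
     (\<forall>x\<in>V. \<forall>y\<in>V. deg E x > nstar \<longrightarrow> deg E y > nstar \<longrightarrow> x \<noteq> y \<longrightarrow>
        real (gdist E x y) \<ge> \<phi> (real (max (deg E x) (deg E y))))"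

end

theory Submission
  imports Defs
begin

(* Vertices of degree > n_* are at distance \<ge> \<phi>(n_*+1) > 1 from each other, so every edge xy
   has an endpoint of degree \<le> n_*; together with \<rho>(o,x) \<ge> \<rho>(o,y) - 1 this bounds the edge weight
   (n(x) n(y))^\<theta> e^{-\<alpha>\<rho>(o,x)} by n_*^\<theta> (e^\<alpha> w(y) + w(x)), where w(z) = n(z)^\<theta> e^{-\<alpha>\<rho>(o,z)}.
   Summing over all oriented edges counts each vertex z exactly n(z) times, and \<Sum> n(z) w(z) is
   T_o(\<alpha>,\<theta>). *)

lemma is_walk_one: "E x y \<Longrightarrow> is_walk E x y 1"
  unfolding is_walk_def by (rule exI[of _ "\<lambda>i. if i = 0 then x else y"]) auto

lemma is_walk_snoc:
  assumes "is_walk E x y k" "E y z"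
  shows "is_walk E x z (Suc k)"
proof -
  obtain p where p: "p 0 = x" "p k = y" "\<forall>i<k. E (p i) (p (Suc i))"
    using assms(1) unfolding is_walk_def by blast
  define q where "q = (\<lambda>i. if i \<le> k then p i else z)"
  have "q 0 = x" "q (Suc k) = z" using p by (auto simp: q_def)
  moreover have "E (q i) (q (Suc i))" if "i < Suc k" for i
    using that p assms(2) by (cases "i < k") (auto simp: q_def less_Suc_eq)
  ultimately show ?thesis unfolding is_walk_def by blast
qed

lemma is_walk_gdist:
  assumes "cclf_graph V E" "x \<in> V" "y \<in> V"
  shows "is_walk E x y (gdist E x y)"
proof -
  obtain k where "is_walk E x y k" using assms unfolding cclf_graph_def by blast
  then show ?thesis unfolding gdist_def by (rule LeastI)
qed

lemma gdist_le_1: "E x y \<Longrightarrow> gdist E x y \<le> 1"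
  unfolding gdist_def by (rule Least_le) (rule is_walk_one)

lemma gdist_neighbour_le:
  assumes "cclf_graph V E" "r \<in> V" "x \<in> V" "E x y"
  shows "gdist E r y \<le> gdist E r x + 1"
proof -
  have "is_walk E r y (Suc (gdist E r x))"
    using is_walk_snoc[OF is_walk_gdist[OF assms(1-3)] assms(4)] .
  then show ?thesis unfolding gdist_def by (metis Least_le Suc_eq_plus1)
qed

lemma in_GG_adjacent_low_degree:
  assumes "in_GG V E nstar \<phi>" "strict_mono_on {real nstar<..} \<phi>" "\<phi> (real nstar + 1) > 1"
    and "x \<in> V" "y \<in> V" "x \<noteq> y" "E x y"
  shows "deg E x \<le> nstar \<or> deg E y \<le> nstar"
proof (rule ccontr)
  assume "\<not> ?thesis"
  then have high: "deg E x > nstar" "deg E y > nstar" by auto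
  let ?m = "real (max (deg E x) (deg E y))"
  have "1 < \<phi> (real nstar + 1)" by fact
  also have "\<dots> \<le> \<phi> ?m"
    using high by (intro strict_mono_on_leD[OF assms(2)]) auto
  also have "\<dots> \<le> real (gdist E x y)"
    using assms(1,4-6) high unfolding in_GG_def by blast
  also have "\<dots> \<le> 1" using gdist_le_1[of E x y] assms(7) by simp
  finally show False by simp
qed

lemma infsum_cmult_right_ennreal:
  fixes f :: "'a \<Rightarrow> ennreal"
  shows "(\<Sum>\<^sub>\<infinity>x\<in>A. c * f x) = c * (\<Sum>\<^sub>\<infinity>x\<in>A. f x)"
  by (simp add: nonneg_infsum_complete sum_distrib_left SUP_mult_left_ennreal)

lemma infsum_neighbours_le_degree:
  fixes g :: "'a \<Rightarrow> ennreal"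
  assumes sym: "\<And>x y. E x y \<Longrightarrow> E y x" and in_V: "\<And>x y. E x y \<Longrightarrow> x \<in> V"
    and fin: "\<And>x. x \<in> V \<Longrightarrow> finite {y. E x y}"
  shows "(\<Sum>\<^sub>\<infinity>x\<in>V. \<Sum>\<^sub>\<infinity>y\<in>{y. E x y}. g y) \<le> (\<Sum>\<^sub>\<infinity>y\<in>V. of_nat (deg E y) * g y)"
proof (rule infsum_le_finite_sums)
  fix F assume F: "finite F" "F \<subseteq> V"
  define H where "H = (\<Union>x\<in>F. {y. E x y})"
  have H: "finite H" "H \<subseteq> V" using F fin by (auto simp: H_def intro: in_V sym)
  have "(\<Sum>x\<in>F. \<Sum>\<^sub>\<infinity>y\<in>{y. E x y}. g y) = (\<Sum>x\<in>F. \<Sum>y\<in>{y \<in> H. E x y}. g y)"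
  proof (rule sum.cong)
    fix x assume "x \<in> F"
    then have "{y \<in> H. E x y} = {y. E x y}" by (auto simp: H_def)
    then show "(\<Sum>\<^sub>\<infinity>y\<in>{y. E x y}. g y) = (\<Sum>y\<in>{y \<in> H. E x y}. g y)"
      using F fin \<open>x \<in> F\<close> by auto
  qed simp
  also have "\<dots> = (\<Sum>y\<in>H. of_nat (card {x \<in> F. E x y}) * g y)"
    by (simp add: sum.swap_restrict[OF F(1) H(1)])
  also have "\<dots> \<le> (\<Sum>y\<in>H. of_nat (deg E y) * g y)"
  proof (intro sum_mono mult_right_mono)
    fix y assume "y \<in> H"
    then have "card {x \<in> F. E x y} \<le> card {x. E y x}"
      using H fin sym by (intro card_mono) auto
    then show "of_nat (card {x \<in> F. E x y}) \<le> (of_nat (deg E y) :: ennreal)"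
      by (simp add: deg_def)
  qed simp
  also have "\<dots> = (\<Sum>\<^sub>\<infinity>y\<in>H. of_nat (deg E y) * g y)" using H by simp
  also have "\<dots> \<le> (\<Sum>\<^sub>\<infinity>y\<in>V. of_nat (deg E y) * g y)"
    using H by (intro infsum_mono_neutral nonneg_summable_on_complete) auto
  finally show "(\<Sum>x\<in>F. \<Sum>\<^sub>\<infinity>y\<in>{y. E x y}. g y) \<le> (\<Sum>\<^sub>\<infinity>y\<in>V. of_nat (deg E y) * g y)" .
qed (intro nonneg_summable_on_complete, simp)

lemma edge_weight_le:
  fixes m n N :: nat and dx dy \<alpha> \<theta> :: real
  assumes "m \<le> N \<or> n \<le> N" "dy \<le> dx + 1" "\<alpha> \<ge> 0" "\<theta> \<ge> 0"
  shows "real (m * n) powr \<theta> * exp (- \<alpha> * dx)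
    \<le> real N powr \<theta> * (exp \<alpha> * (real n powr \<theta> * exp (- \<alpha> * dy)) + real m powr \<theta> * exp (- \<alpha> * dx))"
    (is "?w \<le> ?c * (?a + ?b)")
proof -
  have split: "?w = real m powr \<theta> * real n powr \<theta> * exp (- \<alpha> * dx)"
    by (simp add: powr_mult)
  have "\<alpha> * dy \<le> \<alpha> * (dx + 1)" using assms(2,3) by (rule mult_left_mono)
  then have exp_le: "exp (- \<alpha> * dx) \<le> exp \<alpha> * exp (- \<alpha> * dy)"
    by (simp add: algebra_simps flip: exp_add)
  have "?w \<le> ?c * ?a \<or> ?w \<le> ?c * ?b"
    using assms(1)
  proof
    assume "m \<le> N"
    then have "real m powr \<theta> \<le> ?c" using assms(4) by (intro powr_mono2) auto
    then have "?w \<le> ?c * real n powr \<theta> * exp (- \<alpha> * dx)"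
      unfolding split by (intro mult_right_mono) auto
    also have "\<dots> \<le> ?c * real n powr \<theta> * (exp \<alpha> * exp (- \<alpha> * dy))"
      using exp_le by (intro mult_left_mono) auto
    finally show ?thesis by (simp add: mult_ac)
  next
    assume "n \<le> N"
    then have "real n powr \<theta> \<le> ?c" using assms(4) by (intro powr_mono2) auto
    then have "?w \<le> real m powr \<theta> * ?c * exp (- \<alpha> * dx)"
      unfolding split by (intro mult_right_mono mult_left_mono) auto
    then show ?thesis by (simp add: mult_ac)
  qed
  moreover have "?c * ?a \<ge> 0" "?c * ?b \<ge> 0" by simp_all
  ultimately show ?thesis unfolding distrib_left by (meson add_increasing add_increasing2)
qed

lemma of_nat_mult_ennreal_powr:
  assumes "t \<ge> 0"
  shows "of_nat n * ennreal (real n powr \<theta> * t) = ennreal (real n powr (1 + \<theta>) * t)"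
proof -
  have "of_nat n * ennreal (real n powr \<theta> * t) = ennreal (real n * (real n powr \<theta> * t))"
    using assms by (simp add: ennreal_of_nat_eq_real_of_nat ennreal_mult)
  also have "real n * (real n powr \<theta> * t) = real n powr (1 + \<theta>) * t"
    by (simp add: powr_mult_base mult.assoc [symmetric])
  finally show ?thesis .
qed

definition vertex_weight :: "('a \<Rightarrow> 'a \<Rightarrow> bool) \<Rightarrow> 'a \<Rightarrow> real \<Rightarrow> real \<Rightarrow> 'a \<Rightarrow> ennreal" where
  "vertex_weight E r \<alpha> \<theta> x = ennreal (real (deg E x) powr \<theta> * exp (- \<alpha> * real (gdist E r x)))"

lemma Tsum_eq_degree_sum: "Tsum V E r \<alpha> \<theta> = (\<Sum>\<^sub>\<infinity>y\<in>V. of_nat (deg E y) * vertex_weight E r \<alpha> \<theta> y)"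
  by (simp add: Tsum_def vertex_weight_def of_nat_mult_ennreal_powr)

lemma edge_weight_le_vertex_weights:
  assumes "cclf_graph V E" "r \<in> V" "in_GG V E nstar \<phi>"
    and "strict_mono_on {real nstar<..} \<phi>" "\<phi> (real nstar + 1) > 1"
    and "\<alpha> \<ge> 0" "\<theta> \<ge> 0" "E x y"
  shows "ennreal (real (deg E x * deg E y) powr \<theta> * exp (- \<alpha> * real (gdist E r x)))
    \<le> ennreal (real nstar powr \<theta> * exp \<alpha>) * vertex_weight E r \<alpha> \<theta> y
      + ennreal (real nstar powr \<theta>) * vertex_weight E r \<alpha> \<theta> x"
proof -
  have "x \<in> V" "y \<in> V" "x \<noteq> y"
    using assms(1,8) unfolding cclf_graph_def by metis+
  then have "deg E x \<le> nstar \<or> deg E y \<le> nstar"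
    using in_GG_adjacent_low_degree[OF assms(3-5)] assms(8) by blast
  moreover have "gdist E r y \<le> gdist E r x + 1"
    using gdist_neighbour_le[OF assms(1,2) \<open>x \<in> V\<close> assms(8)] .
  ultimately have "real (deg E x * deg E y) powr \<theta> * exp (- \<alpha> * real (gdist E r x))
      \<le> real nstar powr \<theta> * (exp \<alpha> * (real (deg E y) powr \<theta> * exp (- \<alpha> * real (gdist E r y)))
          + real (deg E x) powr \<theta> * exp (- \<alpha> * real (gdist E r x)))"
    using assms(6,7) by (intro edge_weight_le) auto
  then show ?thesis
    unfolding vertex_weight_def by (simp add: distrib_left mult.assoc flip: ennreal_mult ennreal_plus)
qed

theorem lemma5p3:
  fixes V :: "'a set" and E :: "'a \<Rightarrow> 'a \<Rightarrow> bool" and r :: 'a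
    and nstar :: nat and \<phi> :: "real \<Rightarrow> real" and \<alpha> \<theta> :: real
  assumes "cclf_graph V E" and "r \<in> V"
    and "nstar > 2"
    and "strict_mono_on {real nstar<..} \<phi>"
    and "\<forall>t > real nstar. \<phi> t > 0"
    and "\<phi> (real nstar + 1) > 1"
    and "in_GG V E nstar \<phi>"
    and "\<theta> > 0" and "\<alpha> > 0"
  shows "Theta V E r \<alpha> \<theta> \<le> ennreal (real nstar powr \<theta> * (exp \<alpha> + 1)) * Tsum V E r \<alpha> \<theta>"
proof -
  have sym: "\<And>x y. E x y \<Longrightarrow> E y x" and in_V: "\<And>x y. E x y \<Longrightarrow> x \<in> V"
    and fin: "\<And>x. x \<in> V \<Longrightarrow> finite {y. E x y}"
    using assms(1) unfolding cclf_graph_def by blast+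
  define a where "a = ennreal (real nstar powr \<theta> * exp \<alpha>)"
  define b where "b = ennreal (real nstar powr \<theta>)"
  let ?w = "vertex_weight E r \<alpha> \<theta>"
  have "Theta V E r \<alpha> \<theta> \<le> (\<Sum>\<^sub>\<infinity>x\<in>V. \<Sum>\<^sub>\<infinity>y\<in>{y. E x y}. a * ?w y + b * ?w x)"
    unfolding Theta_def a_def b_def using assms
    by (intro infsum_mono nonneg_summable_on_complete edge_weight_le_vertex_weights) auto
  also have "\<dots> = (\<Sum>\<^sub>\<infinity>x\<in>V. (\<Sum>\<^sub>\<infinity>y\<in>{y. E x y}. a * ?w y) + of_nat (deg E x) * (b * ?w x))"
    using fin by (intro infsum_cong) (simp add: sum.distrib deg_def)
  also have "\<dots> = (\<Sum>\<^sub>\<infinity>x\<in>V. \<Sum>\<^sub>\<infinity>y\<in>{y. E x y}. a * ?w y) + (\<Sum>\<^sub>\<infinity>x\<in>V. of_nat (deg E x) * (b * ?w x))"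
    by (intro infsum_add nonneg_summable_on_complete) simp_all
  also have "\<dots> \<le> (\<Sum>\<^sub>\<infinity>y\<in>V. of_nat (deg E y) * (a * ?w y)) + (\<Sum>\<^sub>\<infinity>x\<in>V. of_nat (deg E x) * (b * ?w x))"
    using sym in_V fin by (intro add_right_mono infsum_neighbours_le_degree) auto
  also have "\<dots> = (a + b) * Tsum V E r \<alpha> \<theta>"
    by (simp add: Tsum_eq_degree_sum infsum_cmult_right_ennreal distrib_right mult.left_commute)
  also have "a + b = ennreal (real nstar powr \<theta> * (exp \<alpha> + 1))"
    by (simp add: a_def b_def distrib_left flip: ennreal_plus)
  finally show ?thesis .
qed

end
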